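(* Consider the following setting. Let $d,p\ge 1$. A confounder $\mathbf Z\in\mathbb R^d$, a treatment $\mathbf X\in\mathbb R^p$ and an outcome $Y\in\mathbb R$ are generated by the linear Gaussian structural equation model $\mathbf Z\leftarrow \mathbf N_{\mathbf Z}$, $\mathbf X\leftarrow \mathbf B\mathbf Z+\mathbf N_{\mathbf X}$, $Y\leftarrow \mathbf Z^\top\boldsymbol\gamma+\mathbf X^\top\boldsymbol\alpha+N_Y$, where $\mathbf B\in\mathbb R^{p\times d}$, $\boldsymbol\gamma\in\mathbb R^d$, $\boldsymbol\alpha\in\mathbb R^p$, and $\mathbf N_{\mathbf Z}\sim\mathcal N(\mathbf 0,\Sigma_{\mathbf N_{\mathbf Z}})$, $\mathbf N_{\mathbf X}\sim\mathcal N(\mathbf 0,\Sigma_{\mathbf N_{\mathbf X}})$, $N_Y\sim\mathcal N(0,\sigma^2_{N_Y})$ are mutually independent. Let $P_{\mathrm{obs}}$ be the induced distribution of $(\mathbf X,Y)$. Let $P_{\mathrm{int}}$ be the distribution of $(\mathbf X,Y)$ in the modified model where the assignment of $\mathbf X$ is replaced by $\mathbf X\leftarrow\widetilde{\mathbf N}_{\mathbf X}$, with $\widetilde{\mathbf N}_{\mathbf X}$ (possibly non-Gaussian) independent of $\mathbf N_{\mathbf Z}$ and $N_Y$. Let $n=n(m)$, and let $(\mathbf X_O,\mathbf Y_O)\in\mathbb R^{n\times p}\times\mathbb R^n$ consist of $n$ i.i.d. samples from $P_{\mathrm{obs}}$ and $(\mathbf X_I,\mathbf Y_I)\in\mathbb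 R^{m\times p}\times\mathbb R^m$ of $m$ i.i.d. samples from $P_{\mathrm{int}}$, the two samples independent. Let $\widehat{\boldsymbol\alpha}_O=(\mathbf X_O^\top\mathbf X_O)^{-1}\mathbf X_O^\top\mathbf Y_O$, $\widehat{\boldsymbol\alpha}_I=(\mathbf X_I^\top\mathbf X_I)^{-1}\mathbf X_I^\top\mathbf Y_I$, $\widehat\sigma^2_{\mathrm{int}}=\frac1{m-1}\|\mathbf Y_I-\mathbf X_I\widehat{\boldsymbol\alpha}_I\|_2^2$, $\widehat\sigma^2_{\mathrm{obs}}=\frac1{n-1}\|\mathbf Y_O-\mathbf X_O\widehat{\boldsymbol\alpha}_O\|_2^2$, $\widehat{\mathbf C}_I=(\mathbf X_I^\top\mathbf X_I)^{-1}\widehat\sigma^2_{\mathrm{int}}$, $\widehat{\mathbf C}_O=(\mathbf X_O^\top\mathbf X_O)^{-1}\widehat\sigma^2_{\mathrm{obs}}$, $\widehat{\boldsymbol\Delta}_m=\widehat{\boldsymbol\alpha}_O-\widehat{\boldsymbol\alpha}_I$, and for a fixed $\epsilon>0$ $\widehat{\mathbf W}^m_*=\big(\widehat{\mathbf C}_O+\widehat{\boldsymbol\Delta}_m\widehat{\boldsymbol\Delta}_m^\top+\epsilon\mathbf I_p\big)\big(\widehat{\mathbf C}_I+\widehat{\mathbf C}_O+\widehat{\boldsymbol\Delta}_m\widehat{\boldsymbol\Delta}_m^\top+\epsilon\mathbf I_p\big)^{-1}$. Suppose $\lim_{m\to\infty} n(m)/m=c$ for some constant $c>0$. Then $\widehat{\mathbf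 W}^m_*$ converges almost surely to $\mathbf I_p$ as $m\to\infty$.
   Context: The matrices $\mathbf X_O^\top\mathbf X_O$ and $\mathbf X_I^\top\mathbf X_I$ are assumed non-singular. A sequence of random matrices $\widehat{\mathbf M}_m$ converges almost surely to a random matrix $\mathbf M$ if $P\big(\lim_{m\to\infty}\widehat{\mathbf M}_m=\mathbf M\big)=1$. *)

theory Defs
  imports "HOL-Probability.Probability"
begin

definition outer :: "real^'p \<Rightarrow> real^'p \<Rightarrow> real^'p^'p" where
  "outer u v = (\<chi> i j. u $ i * v $ j)"

text \<open>Centered Gaussian random vector with covariance matrix S, defined via its
  characteristic function (this also covers degenerate covariance).\<close>
definition centered_gaussian_vec ::
  "'a measure \<Rightarrow> ('a \<Rightarrow> real^'k) \<Rightarrow> real^'k^'k \<Rightarrow> bool" where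
  "centered_gaussian_vec M V S \<longleftrightarrow>
     V \<in> borel_measurable M \<and> transpose S = S \<and> (\<forall>u. 0 \<le> u \<bullet> (S *v u)) \<and>
     (\<forall>u. (\<integral>\<omega>. cis (u \<bullet> V \<omega>) \<partial>M) = complex_of_real (exp (- (u \<bullet> (S *v u)) / 2)))"

definition centered_gaussian_real ::
  "'a measure \<Rightarrow> ('a \<Rightarrow> real) \<Rightarrow> real \<Rightarrow> bool" where
  "centered_gaussian_real M V s2 \<longleftrightarrow>
     V \<in> borel_measurable M \<and> 0 \<le> s2 \<and>
     (\<forall>t. (\<integral>\<omega>. cis (t * V \<omega>) \<partial>M) = complex_of_real (exp (- (t\<^sup>2 * s2) / 2)))"

text \<open>For a sample (x_i, y_i), i < k (the rows of the design matrix X and the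
  vector Y): X^T X, the OLS estimate, the residual variance estimate and C-hat.\<close>
definition gram :: "(nat \<Rightarrow> real^'p) \<Rightarrow> nat \<Rightarrow> real^'p^'p" where
  "gram x k = (\<Sum>i<k. outer (x i) (x i))"

definition ols :: "(nat \<Rightarrow> real^'p) \<Rightarrow> (nat \<Rightarrow> real) \<Rightarrow> nat \<Rightarrow> real^'p" where
  "ols x y k = matrix_inv (gram x k) *v (\<Sum>i<k. y i *\<^sub>R x i)"

definition sigma2_hat :: "(nat \<Rightarrow> real^'p) \<Rightarrow> (nat \<Rightarrow> real) \<Rightarrow> nat \<Rightarrow> real" where
  "sigma2_hat x y k = (\<Sum>i<k. (y i - x i \<bullet> ols x y k)\<^sup>2) / (real k - 1)"

definition C_hat :: "(nat \<Rightarrow> real^'p) \<Rightarrow> (nat \<Rightarrow> real) \<Rightarrow> nat \<Rightarrow> real^'p^'p" where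
  "C_hat x y k = sigma2_hat x y k *\<^sub>R matrix_inv (gram x k)"

definition W_hat :: "real \<Rightarrow> (nat \<Rightarrow> real^'p) \<Rightarrow> (nat \<Rightarrow> real) \<Rightarrow> (nat \<Rightarrow> real^'p) \<Rightarrow>
    (nat \<Rightarrow> real) \<Rightarrow> nat \<Rightarrow> nat \<Rightarrow> real^'p^'p" where
  "W_hat \<epsilon> xO yO xI yI nn m =
     (let \<Delta> = ols xO yO nn - ols xI yI m;
          A = C_hat xO yO nn + outer \<Delta> \<Delta> + \<epsilon> *\<^sub>R mat 1
      in A ** matrix_inv (C_hat xI yI m + A))"

end

(* The weight matrix satisfies W - I = -C_I (C_I + A)^-1 with A = C_O + Delta Delta^T + eps I
   bounded below by eps I, so ||W - I|| is at most a multiple of ||C_I|| / eps, and it suffices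
   that C_I = sigma_I^2 (X_I^T X_I)^-1 tends to 0 almost surely.

   The residual variance sigma_I^2 stays bounded: the OLS residuals are no larger than the true
   errors Z^T gamma + N_Y, whose sums of squares grow linearly (a fourth-moment strong law, via
   Chebyshev and Borel-Cantelli along the subsequence of squares).

   The smallest eigenvalue of X_I^T X_I tends to infinity: as the Gram matrices are eventually
   invertible, the i.i.d. rows x do not lie almost surely in a hyperplane, so for each unit vector
   u some event |u . x| > eta, |x| <= R has positive probability and hence occurs infinitely often
   (second Borel-Cantelli lemma); a finite cover of the unit sphere makes this uniform in u. *)
theory Submission
  imports Defs "HOL-Library.Discrete_Functions"
begin

section \<open>Quadratic forms and Gram matrices\<close>

definition quadform_ge :: "real^'n^'n \<Rightarrow> real \<Rightarrow> bool" where
  "quadform_ge G L \<longleftrightarrow> (\<forall>u. L * (norm u)\<^sup>2 \<le> u \<bullet> (G *v u))"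

lemma quadform_geD: "quadform_ge G L \<Longrightarrow> L * (norm u)\<^sup>2 \<le> u \<bullet> (G *v u)"
  by (simp add: quadform_ge_def)

lemma quadform_ge_add: "quadform_ge A a \<Longrightarrow> quadform_ge B b \<Longrightarrow> quadform_ge (A + B) (a + b)"
  unfolding quadform_ge_def by (simp add: matrix_vector_mult_add_rdistrib inner_add_right
      distrib_right add_mono)

lemma quadform_ge_scaleR_mat_1: "quadform_ge (e *\<^sub>R mat 1) e"
  by (simp add: quadform_ge_def scaleR_matrix_vector_assoc[symmetric] power2_norm_eq_inner)

lemma outer_mult_vector: "outer u v *v w = (v \<bullet> w) *\<^sub>R u"
  by (simp add: outer_def matrix_vector_mult_def vec_eq_iff inner_vec_def sum_distrib_left
      mult.assoc mult.commute mult.left_commute)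

lemma quadform_ge_outer_self: "quadform_ge (outer v v) 0"
  by (simp add: quadform_ge_def outer_mult_vector inner_commute)

lemma gram_mult_vector: "gram x k *v w = (\<Sum>i<k. (x i \<bullet> w) *\<^sub>R x i)"
proof (induction k)
  case (Suc k)
  have "gram x (Suc k) = gram x k + outer (x k) (x k)" by (simp add: gram_def)
  then show ?case using Suc by (simp add: matrix_vector_mult_add_rdistrib outer_mult_vector)
qed (simp add: gram_def)

lemma inner_gram_mult_vector: "w \<bullet> (gram x k *v w) = (\<Sum>i<k. (x i \<bullet> w)\<^sup>2)"
  by (simp add: gram_mult_vector inner_sum_right power2_eq_square inner_commute)

lemma quadform_ge_gram: "quadform_ge (gram x k) 0"
  by (simp add: quadform_ge_def inner_gram_mult_vector sum_nonneg)

lemma invertible_matrix_inv: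
  fixes G :: "real^'n^'n"
  assumes "invertible G"
  shows "G ** matrix_inv G = mat 1" "matrix_inv G ** G = mat 1"
  using someI_ex[OF assms[unfolded invertible_def]] unfolding matrix_inv_def by auto

lemma quadform_ge_imp_invertible:
  fixes G :: "real^'n^'n"
  assumes "L > 0" and "quadform_ge G L"
  shows "invertible G"
proof -
  have "x = 0" if "G *v x = 0" for x
    using quadform_geD[OF assms(2), of x] that assms(1) by (simp add: mult_le_0_iff)
  then show ?thesis using matrix_left_invertible_ker invertible_left_inverse by blast
qed

lemma norm_matrix_inv_mult_le:
  fixes G :: "real^'n^'n"
  assumes L: "L > 0" and G: "quadform_ge G L"
  shows "norm (matrix_inv G *v v) \<le> norm v / L"
proof -
  define w where "w = matrix_inv G *v v"
  have "G *v w = v"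
    using invertible_matrix_inv[OF quadform_ge_imp_invertible[OF assms]]
    by (simp add: w_def matrix_vector_mul_assoc)
  then have "L * (norm w)\<^sup>2 \<le> w \<bullet> v" using quadform_geD[OF G, of w] by simp
  also have "\<dots> \<le> norm w * norm v" by (rule norm_cauchy_schwarz)
  finally have "L * norm w \<le> norm v"
    by (cases "norm w = 0") (auto simp: power2_eq_square mult.assoc[symmetric])
  then show ?thesis using L by (simp add: w_def field_simps)
qed

lemma abs_matrix_inv_entry_le:
  fixes G :: "real^'n^'n"
  assumes "L > 0" and "quadform_ge G L"
  shows "\<bar>matrix_inv G $ i $ j\<bar> \<le> 1 / L"
proof -
  have "matrix_inv G $ i $ j = (matrix_inv G *v axis j 1) $ i"
    by (simp add: matrix_vector_mult_def axis_def if_distrib cong: if_cong)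
  then have "\<bar>matrix_inv G $ i $ j\<bar> \<le> norm (matrix_inv G *v axis j 1)"
    by (metis component_le_norm_cart real_norm_def)
  also have "\<dots> \<le> norm (axis j (1::real)) / L" by (rule norm_matrix_inv_mult_le[OF assms])
  finally show ?thesis by simp
qed

lemma quadform_ge_matrix_inv:
  fixes G :: "real^'n^'n"
  assumes "invertible G" and "quadform_ge G 0"
  shows "quadform_ge (matrix_inv G) 0"
  unfolding quadform_ge_def
proof
  fix u :: "real^'n"
  define w where "w = matrix_inv G *v u"
  have "G *v w = u"
    using invertible_matrix_inv[OF assms(1)] by (simp add: w_def matrix_vector_mul_assoc)
  then have "u \<bullet> w = w \<bullet> (G *v w)" by (simp add: inner_commute)
  then show "0 * (norm u)\<^sup>2 \<le> u \<bullet> (matrix_inv G *v u)"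
    using quadform_geD[OF assms(2), of w] by (simp add: w_def)
qed

lemma norm_le_sum_abs_entries: "norm (X::real^'n^'m) \<le> (\<Sum>i\<in>UNIV. \<Sum>j\<in>UNIV. \<bar>X $ i $ j\<bar>)"
proof -
  have "norm X \<le> (\<Sum>i\<in>UNIV. norm (X $ i))" by (simp add: norm_vec_def L2_set_le_sum)
  also have "\<dots> \<le> (\<Sum>i\<in>UNIV. \<Sum>j\<in>UNIV. \<bar>X $ i $ j\<bar>)"
    by (intro sum_mono) (use norm_le_l1_cart in auto)
  finally show ?thesis .
qed

lemma norm_matrix_mult_le_entry_bound:
  fixes A :: "real^'n^'m" and B :: "real^'p^'n"
  assumes "\<And>k j. \<bar>B $ k $ j\<bar> \<le> b"
  shows "norm (A ** B) \<le> CARD('p) * (\<Sum>i\<in>UNIV. \<Sum>k\<in>UNIV. \<bar>A $ i $ k\<bar>) * b"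
proof -
  have entry: "\<bar>(A ** B) $ i $ j\<bar> \<le> (\<Sum>k\<in>UNIV. \<bar>A $ i $ k\<bar>) * b" for i j
  proof -
    have "\<bar>(A ** B) $ i $ j\<bar> \<le> (\<Sum>k\<in>UNIV. \<bar>A $ i $ k\<bar> * \<bar>B $ k $ j\<bar>)"
      unfolding matrix_matrix_mult_def by (simp add: abs_mult[symmetric] sum_abs)
    also have "\<dots> \<le> (\<Sum>k\<in>UNIV. \<bar>A $ i $ k\<bar> * b)"
      by (intro sum_mono mult_left_mono assms) auto
    finally show ?thesis by (simp add: sum_distrib_right)
  qed
  have "norm (A ** B) \<le> (\<Sum>i\<in>UNIV. \<Sum>j\<in>(UNIV::'p set). (\<Sum>k\<in>UNIV. \<bar>A $ i $ k\<bar>) * b)"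
    by (rule order.trans[OF norm_le_sum_abs_entries]) (intro sum_mono entry)
  also have "\<dots> = CARD('p) * (\<Sum>i\<in>UNIV. \<Sum>k\<in>UNIV. \<bar>A $ i $ k\<bar>) * b"
    by (simp add: sum_distrib_left sum_distrib_right mult.assoc)
  finally show ?thesis .
qed

lemma norm_matrix_inv_le:
  fixes G :: "real^'n^'n"
  assumes "L > 0" and "quadform_ge G L"
  shows "norm (matrix_inv G) \<le> CARD('n)^2 / L"
proof -
  have "norm (matrix_inv G) \<le> (\<Sum>i\<in>(UNIV::'n set). \<Sum>j\<in>(UNIV::'n set). 1 / L)"
    by (rule order.trans[OF norm_le_sum_abs_entries])
       (intro sum_mono abs_matrix_inv_entry_le[OF assms])
  then show ?thesis by (simp add: power2_eq_square)
qed

lemma matrix_inv_tendsto_0: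
  fixes G :: "nat \<Rightarrow> real^'n^'n"
  assumes "\<And>L. L > 0 \<Longrightarrow> eventually (\<lambda>m. quadform_ge (G m) L) sequentially"
  shows "(\<lambda>m. matrix_inv (G m)) \<longlonglongrightarrow> 0"
proof (rule LIMSEQ_I)
  fix r :: real assume r: "r > 0"
  define L where "L = 2 * CARD('n)^2 / r"
  have L: "L > 0" using r by (simp add: L_def)
  from assms[OF L] show "\<exists>m0. \<forall>m\<ge>m0. norm (matrix_inv (G m) - 0) < r"
    unfolding eventually_sequentially
  proof (elim exE, intro exI allI impI)
    fix m0 m assume "\<forall>m\<ge>m0. quadform_ge (G m) L" "m0 \<le> m"
    then have "norm (matrix_inv (G m)) \<le> CARD('n)^2 / L" by (intro norm_matrix_inv_le[OF L]) auto
    also have "\<dots> < r" using r by (simp add: L_def)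
    finally show "norm (matrix_inv (G m) - 0) < r" by simp
  qed
qed

section \<open>Least squares and the weight matrix\<close>

lemma ols_normal_equations:
  assumes "invertible (gram x k)"
  shows "gram x k *v ols x y k = (\<Sum>i<k. y i *\<^sub>R x i)"
  using invertible_matrix_inv[OF assms] by (simp add: ols_def matrix_vector_mul_assoc)

lemma ols_minimizes_rss:
  assumes "invertible (gram x k)"
  shows "(\<Sum>i<k. (y i - x i \<bullet> ols x y k)\<^sup>2) \<le> (\<Sum>i<k. (y i - x i \<bullet> \<beta>)\<^sup>2)"
proof -
  define a where "a = ols x y k"
  define d where "d = a - \<beta>"
  define r where "r i = y i - x i \<bullet> a" for i
  have split: "y i - x i \<bullet> \<beta> = r i + x i \<bullet> d" for i
    by (simp add: r_def d_def inner_diff_right)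
  have "(\<Sum>i<k. r i * (x i \<bullet> d)) = d \<bullet> (\<Sum>i<k. y i *\<^sub>R x i) - d \<bullet> (gram x k *v a)"
    by (simp add: r_def gram_mult_vector inner_sum_right sum_subtractf[symmetric] algebra_simps
        inner_commute)
  also have "\<dots> = 0"
    using ols_normal_equations[OF assms, of y] by (simp add: a_def)
  finally have orthogonal: "(\<Sum>i<k. r i * (x i \<bullet> d)) = 0" .
  have "(\<Sum>i<k. (y i - x i \<bullet> \<beta>)\<^sup>2)
      = (\<Sum>i<k. (r i)\<^sup>2) + 2 * (\<Sum>i<k. r i * (x i \<bullet> d)) + (\<Sum>i<k. (x i \<bullet> d)\<^sup>2)"
    by (simp add: split power2_sum sum.distrib sum_distrib_left mult.assoc)
  also have "\<dots> \<ge> (\<Sum>i<k. (r i)\<^sup>2)"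
    using orthogonal by (simp add: sum_nonneg)
  finally show ?thesis by (simp add: r_def a_def)
qed

lemma sigma2_hat_nonneg: "0 \<le> sigma2_hat x y k"
  by (cases k) (simp_all add: sigma2_hat_def divide_nonneg_nonneg sum_nonneg)

lemma sigma2_hat_le:
  assumes "invertible (gram x m)" and "m \<ge> 2"
    and rss: "(\<Sum>i<m. (y i - x i \<bullet> \<beta>)\<^sup>2) \<le> C * real m"
  shows "sigma2_hat x y m \<le> 2 * C"
proof -
  have "0 \<le> C * real m" using rss by (meson order.trans sum_nonneg zero_le_power2)
  then have "C * real m \<le> 2 * C * (real m - 1)"
    using \<open>m \<ge> 2\<close> by (simp add: zero_le_mult_iff algebra_simps mult_left_mono)
  then have "(\<Sum>i<m. (y i - x i \<bullet> ols x y m)\<^sup>2) \<le> 2 * C * (real m - 1)"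
    using ols_minimizes_rss[OF assms(1), of y \<beta>] rss by linarith
  then show ?thesis using \<open>m \<ge> 2\<close> by (simp add: sigma2_hat_def divide_le_eq)
qed

lemma quadform_ge_C_hat:
  assumes "invertible (gram x k)"
  shows "quadform_ge (C_hat x y k) 0"
  using quadform_ge_matrix_inv[OF assms quadform_ge_gram] sigma2_hat_nonneg[of x y k]
  by (simp add: quadform_ge_def C_hat_def scaleR_matrix_vector_assoc[symmetric])

lemma C_hat_tendsto_0:
  assumes "eventually (\<lambda>m. sigma2_hat x y m \<le> K) sequentially"
    and "\<And>L. L > 0 \<Longrightarrow> eventually (\<lambda>m. quadform_ge (gram x m) L) sequentially"
  shows "(\<lambda>m. C_hat x y m) \<longlonglongrightarrow> 0"
proof (rule Lim_null_comparison)
  show "eventually (\<lambda>m. norm (C_hat x y m) \<le> K * norm (matrix_inv (gram x m))) sequentially"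
    using assms(1) by eventually_elim (simp add: C_hat_def sigma2_hat_nonneg mult_right_mono)
  show "(\<lambda>m. K * norm (matrix_inv (gram x m))) \<longlonglongrightarrow> 0"
    using matrix_inv_tendsto_0[OF assms(2)] by (intro tendsto_mult_right_zero tendsto_norm_zero)
qed

lemma matrix_mult_add_rdistrib: "((A::real^'n^'m) + B) ** C = A ** C + B ** C"
  by (simp add: matrix_matrix_mult_def vec_eq_iff sum.distrib distrib_right)

lemma W_minus_mat_1:
  fixes A CI :: "real^'n^'n"
  assumes "invertible (CI + A)"
  shows "A ** matrix_inv (CI + A) - mat 1 = - (CI ** matrix_inv (CI + A))"
proof -
  have "A ** matrix_inv (CI + A) - mat 1
      = A ** matrix_inv (CI + A) - (CI + A) ** matrix_inv (CI + A)"
    using invertible_matrix_inv[OF assms] by simp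
  then show ?thesis by (simp add: matrix_mult_add_rdistrib)
qed

lemma W_tendsto_mat_1:
  fixes CO CI :: "nat \<Rightarrow> real^'n^'n" and \<Delta> :: "nat \<Rightarrow> real^'n" and \<epsilon> :: real
  defines "A m \<equiv> CO m + outer (\<Delta> m) (\<Delta> m) + \<epsilon> *\<^sub>R mat 1"
  assumes "\<epsilon> > 0"
    and "eventually (\<lambda>m. quadform_ge (CO m) 0 \<and> quadform_ge (CI m) 0) sequentially"
    and CI: "CI \<longlonglongrightarrow> 0"
  shows "(\<lambda>m. A m ** matrix_inv (CI m + A m)) \<longlonglongrightarrow> mat 1"
proof (rule LIM_zero_cancel, rule Lim_null_comparison)
  define g where "g m = CARD('n) * (\<Sum>i\<in>UNIV. \<Sum>k\<in>UNIV. \<bar>CI m $ i $ k\<bar>) * (1 / \<epsilon>)" for m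
  show "eventually (\<lambda>m. norm (A m ** matrix_inv (CI m + A m) - mat 1) \<le> g m) sequentially"
    using assms(3)
  proof eventually_elim
    case (elim m)
    have "quadform_ge (CI m + A m) (0 + (0 + 0 + \<epsilon>))"
      unfolding A_def using elim
      by (intro quadform_ge_add quadform_ge_outer_self quadform_ge_scaleR_mat_1) auto
    then have B: "quadform_ge (CI m + A m) \<epsilon>" by simp
    have "A m ** matrix_inv (CI m + A m) - mat 1 = - (CI m ** matrix_inv (CI m + A m))"
      by (rule W_minus_mat_1[OF quadform_ge_imp_invertible[OF \<open>\<epsilon> > 0\<close> B]])
    also have "norm \<dots> \<le> g m"
      unfolding norm_minus_cancel g_def
      by (intro norm_matrix_mult_le_entry_bound abs_matrix_inv_entry_le[OF \<open>\<epsilon> > 0\<close> B])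
    finally show ?case .
  qed
  have "(\<lambda>m. \<Sum>i\<in>UNIV. \<Sum>k\<in>UNIV. \<bar>CI m $ i $ k\<bar>)
      \<longlonglongrightarrow> (\<Sum>i\<in>(UNIV::'n set). \<Sum>k\<in>(UNIV::'n set). \<bar>(0::real^'n^'n) $ i $ k\<bar>)"
    by (intro tendsto_intros CI)
  then have "(\<lambda>m. \<Sum>i\<in>UNIV. \<Sum>k\<in>UNIV. \<bar>CI m $ i $ k\<bar>) \<longlonglongrightarrow> 0" by simp
  then show "g \<longlonglongrightarrow> 0"
    unfolding g_def by (intro tendsto_mult_left_zero tendsto_mult_right_zero)
qed

lemma W_hat_tendsto_mat_1:
  assumes "\<epsilon> > 0"
    and "eventually (\<lambda>m. invertible (gram xO (n m))) sequentially"
    and "eventually (\<lambda>m. (\<Sum>i<m. (yI i - xI i \<bullet> \<beta>)\<^sup>2) \<le> C * real m) sequentially"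
    and xI: "\<And>L. L > 0 \<Longrightarrow> eventually (\<lambda>m. quadform_ge (gram xI m) L) sequentially"
  shows "(\<lambda>m. W_hat \<epsilon> xO yO xI yI (n m) m) \<longlonglongrightarrow> mat 1"
proof -
  have invI: "eventually (\<lambda>m. invertible (gram xI m)) sequentially"
    using xI[OF zero_less_one]
    by (rule eventually_mono) (rule quadform_ge_imp_invertible[OF zero_less_one])
  have "eventually (\<lambda>m. sigma2_hat xI yI m \<le> 2 * C) sequentially"
    using invI assms(3) eventually_ge_at_top[of 2] by eventually_elim (rule sigma2_hat_le)
  then have "(\<lambda>m. C_hat xI yI m) \<longlonglongrightarrow> 0" using xI by (rule C_hat_tendsto_0)
  moreover have "eventually (\<lambda>m. quadform_ge (C_hat xO yO (n m)) 0 \<and>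
      quadform_ge (C_hat xI yI m) 0) sequentially"
    using assms(2) invI by eventually_elim (simp add: quadform_ge_C_hat)
  ultimately show ?thesis
    unfolding W_hat_def Let_def by (intro W_tendsto_mat_1 \<open>\<epsilon> > 0\<close>)
qed

section \<open>Independence and Gaussian moments\<close>

lemma (in prob_space) indep_vars_reindex:
  assumes ind: "indep_vars M' X (f ` I)" and inj: "inj_on f I"
  shows "indep_vars (\<lambda>i. M' (f i)) (\<lambda>i. X (f i)) I"
proof -
  define F where "F = (\<lambda>j. sigma_sets (space M) {X j -` A \<inter> space M | A. A \<in> sets (M' j)})"
  have ind': "indep_sets F (f ` I)" using ind by (simp add: indep_vars_def F_def)
  have "indep_sets (\<lambda>i. F (f i)) I"
    unfolding indep_sets_def
  proof (intro conjI ballI allI impI)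
    fix i assume "i \<in> I" then show "F (f i) \<subseteq> events" using ind' by (auto simp: indep_sets_def)
  next
    fix J A assume J: "J \<subseteq> I" "J \<noteq> {}" "finite J" and A: "A \<in> Pi J (\<lambda>i. F (f i))"
    define g where "g = the_inv_into I f"
    have gf: "g (f i) = i" if "i \<in> J" for i using J that inj by (auto simp: g_def the_inv_into_f_f)
    have B: "(\<lambda>j. A (g j)) \<in> Pi (f ` J) F" using A gf by auto
    have "prob (\<Inter>j\<in>f ` J. A (g j)) = (\<Prod>j\<in>f ` J. prob (A (g j)))"
      using ind' J B unfolding indep_sets_def by (meson image_mono image_is_empty finite_imageI)
    moreover have "(\<Inter>j\<in>f ` J. A (g j)) = (\<Inter>i\<in>J. A i)" using gf by auto
    moreover have "(\<Prod>j\<in>f ` J. prob (A (g j))) = (\<Prod>i\<in>J. prob (A i))"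
      using inj J gf by (subst prod.reindex) (auto intro: inj_on_subset)
    ultimately show "prob (\<Inter>j\<in>J. A j) = (\<Prod>j\<in>J. prob (A j))" by simp
  qed
  then show ?thesis using ind by (simp add: indep_vars_def F_def)
qed

lemma (in prob_space) indep_vars_Inr:
  assumes "indep_vars (\<lambda>_. borel) (\<lambda>j \<omega>. case j of Inl k \<Rightarrow> f k \<omega> | Inr k \<Rightarrow> g k \<omega>) UNIV"
    and "h \<in> borel_measurable borel"
  shows "indep_vars (\<lambda>_. borel) (\<lambda>k \<omega>. h (g k \<omega>)) UNIV"
proof -
  have "indep_vars (\<lambda>_. borel) (\<lambda>j \<omega>. h (case j of Inl k \<Rightarrow> f k \<omega> | Inr k \<Rightarrow> g k \<omega>)) (range Inr)"
    by (rule indep_vars_subset[OF indep_vars_compose2[OF assms]]) auto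
  from indep_vars_reindex[OF this] show ?thesis by simp
qed

lemma (in prob_space) prob_eq_of_distr_eq:
  assumes "distr M borel X = distr M borel Y" "X \<in> borel_measurable M" "Y \<in> borel_measurable M"
    and "B \<in> sets borel"
  shows "prob {\<omega>\<in>space M. X \<omega> \<in> B} = prob {\<omega>\<in>space M. Y \<omega> \<in> B}"
proof -
  have "prob {\<omega>\<in>space M. X \<omega> \<in> B} = measure (distr M borel X) B"
    using assms by (subst measure_distr) (auto intro!: arg_cong[where f=prob])
  also have "\<dots> = measure (distr M borel Y) B" by (simp add: assms(1))
  also have "\<dots> = prob {\<omega>\<in>space M. Y \<omega> \<in> B}"
    using assms by (subst measure_distr) (auto intro!: arg_cong[where f=prob])
  finally show ?thesis .
qed

lemma centered_gaussian_vec_inner: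
  assumes "centered_gaussian_vec M V S"
  shows "centered_gaussian_real M (\<lambda>\<omega>. V \<omega> \<bullet> g) (g \<bullet> (S *v g))"
proof -
  have [measurable]: "V \<in> borel_measurable M" and psd: "\<And>u. 0 \<le> u \<bullet> (S *v u)"
    and char: "\<And>u. (\<integral>\<omega>. cis (u \<bullet> V \<omega>) \<partial>M) = complex_of_real (exp (- (u \<bullet> (S *v u)) / 2))"
    using assms by (auto simp: centered_gaussian_vec_def)
  have "(\<integral>\<omega>. cis (t * (V \<omega> \<bullet> g)) \<partial>M) = complex_of_real (exp (- (t\<^sup>2 * (g \<bullet> (S *v g))) / 2))"
    for t :: real
  proof -
    have "(\<integral>\<omega>. cis (t * (V \<omega> \<bullet> g)) \<partial>M) = (\<integral>\<omega>. cis ((t *\<^sub>R g) \<bullet> V \<omega>) \<partial>M)"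
      by (simp add: inner_commute)
    also have "(t *\<^sub>R g) \<bullet> (S *v (t *\<^sub>R g)) = t\<^sup>2 * (g \<bullet> (S *v g))"
      by (simp add: scaleR_matrix_vector_assoc[symmetric] matrix_scaleR_vector_ac power2_eq_square)
    then have "(\<integral>\<omega>. cis ((t *\<^sub>R g) \<bullet> V \<omega>) \<partial>M) = complex_of_real (exp (- (t\<^sup>2 * (g \<bullet> (S *v g))) / 2))"
      by (simp only: char)
    finally show ?thesis .
  qed
  then show ?thesis by (simp add: centered_gaussian_real_def psd)
qed

lemma centered_gaussian_real_distr:
  assumes "prob_space M" and "centered_gaussian_real M V s"
  shows "distr M borel V = distr std_normal_distribution borel (\<lambda>x. sqrt s * x)"
proof -
  interpret prob_space M by fact
  have [measurable]: "V \<in> borel_measurable M" and "0 \<le> s"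
    and char: "\<And>t. (\<integral>\<omega>. cis (t * V \<omega>) \<partial>M) = complex_of_real (exp (- (t\<^sup>2 * s) / 2))"
    using assms(2) by (auto simp: centered_gaussian_real_def)
  interpret std: real_distribution std_normal_distribution by (rule real_dist_normal_dist)
  show ?thesis
  proof (rule Levy_uniqueness)
    show "real_distribution (distr M borel V)" by simp
    show "real_distribution (distr std_normal_distribution borel (\<lambda>x. sqrt s * x))"
      by (rule std.real_distribution_distr) simp
    show "char (distr M borel V) = char (distr std_normal_distribution borel (\<lambda>x. sqrt s * x))"
    proof
      fix t
      have "char (distr M borel V) t = complex_of_real (exp (- (t\<^sup>2 * s) / 2))"
        unfolding char_def using char[of t] by (subst integral_distr) (auto simp: cis_conv_exp)
      also have "\<dots> = char std_normal_distribution (t * sqrt s)"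
        using \<open>0 \<le> s\<close> by (simp add: char_std_normal_distribution power_mult_distrib)
      also have "\<dots> = char (distr std_normal_distribution borel (\<lambda>x. sqrt s * x)) t"
        unfolding char_def by (subst integral_distr) (auto simp: mult.assoc)
      finally show "char (distr M borel V) t = \<dots>" .
    qed
  qed
qed

lemma centered_gaussian_real_moments:
  assumes "prob_space M" and G: "centered_gaussian_real M V s"
  shows "integrable M (\<lambda>\<omega>. V \<omega> ^ 4)" "(\<integral>\<omega>. V \<omega> ^ 2 \<partial>M) = s" "(\<integral>\<omega>. V \<omega> ^ 4 \<partial>M) = 3 * s\<^sup>2"
proof -
  have [measurable]: "V \<in> borel_measurable M" and "0 \<le> s"
    using G by (auto simp: centered_gaussian_real_def)
  note D = centered_gaussian_real_distr[OF assms]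
  have moment: "(\<integral>\<omega>. V \<omega> ^ k \<partial>M) = sqrt s ^ k * (\<integral>x. x ^ k \<partial>std_normal_distribution)" for k
  proof -
    have "(\<integral>\<omega>. V \<omega> ^ k \<partial>M) = (\<integral>x. x ^ k \<partial>distr M borel V)" by (subst integral_distr) auto
    also have "\<dots> = (\<integral>x. (sqrt s * x) ^ k \<partial>std_normal_distribution)"
      unfolding D by (subst integral_distr) auto
    finally show ?thesis by (simp add: power_mult_distrib)
  qed
  have "integrable (distr M borel V) (\<lambda>x. x ^ 4)"
    unfolding D by (subst integrable_distr_eq)
      (auto simp: power_mult_distrib intro!: integrable_std_normal_distribution_moment)
  then show "integrable M (\<lambda>\<omega>. V \<omega> ^ 4)" by (subst (asm) integrable_distr_eq) auto
  show "(\<integral>\<omega>. V \<omega> ^ 2 \<partial>M) = s"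
    using moment[of 2] std_normal_distribution_even_moments(1)[of 1] \<open>0 \<le> s\<close> by simp
  have "sqrt s ^ 4 = s\<^sup>2" using \<open>0 \<le> s\<close> by (metis power_mult real_sqrt_pow2 num_double numeral_times_numeral)
  then show "(\<integral>\<omega>. V \<omega> ^ 4 \<partial>M) = 3 * s\<^sup>2"
    using moment[of 4] std_normal_distribution_even_moments(1)[of 2] by (simp add: fact_numeral)
qed

section \<open>Sums of squares of independent variables\<close>

lemma sum_le_linear_of_square_indices:
  fixes a :: "nat \<Rightarrow> real"
  assumes nonneg: "\<And>i. 0 \<le> a i"
    and squares: "eventually (\<lambda>k. (\<Sum>i<k\<^sup>2. a i) \<le> C * real (k\<^sup>2)) sequentially"
  shows "eventually (\<lambda>m. (\<Sum>i<m. a i) \<le> 4 * C * real m) sequentially"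
proof -
  obtain K where K: "\<And>k. k \<ge> K \<Longrightarrow> (\<Sum>i<k\<^sup>2. a i) \<le> C * real (k\<^sup>2)"
    using squares by (auto simp: eventually_sequentially)
  have "0 \<le> C * real ((Suc K)\<^sup>2)" using K[of "Suc K"] by (meson le_SucI order.refl order.trans sum_nonneg nonneg)
  then have "0 \<le> C" by (simp add: zero_le_mult_iff)
  have "(\<Sum>i<m. a i) \<le> 4 * C * real m" if m: "(Suc K)\<^sup>2 \<le> m" for m
  proof -
    define k where "k = floor_sqrt m"
    have "Suc K \<le> k" using m by (simp add: k_def le_floor_sqrt_iff)
    have "(\<Sum>i<m. a i) \<le> (\<Sum>i<(Suc k)\<^sup>2. a i)"
      using Suc_floor_sqrt_power2_gt[of m] by (intro sum_mono2 nonneg) (auto simp: k_def)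
    also have "\<dots> \<le> C * real ((Suc k)\<^sup>2)" using \<open>Suc K \<le> k\<close> by (intro K) simp
    also have "\<dots> \<le> C * (4 * real (k\<^sup>2))"
    proof (intro mult_left_mono \<open>0 \<le> C\<close>)
      have "real (Suc k) \<le> 2 * real k" using \<open>Suc K \<le> k\<close> by simp
      then have "(real (Suc k))\<^sup>2 \<le> (2 * real k)\<^sup>2" by (intro power_mono) auto
      then show "real ((Suc k)\<^sup>2) \<le> 4 * real (k\<^sup>2)" by (simp add: power_mult_distrib)
    qed
    also have "\<dots> \<le> C * (4 * real m)"
      using floor_sqrt_power2_le[of m] \<open>0 \<le> C\<close> by (intro mult_left_mono) (auto simp: k_def)
    finally show ?thesis by simp
  qed
  then show ?thesis unfolding eventually_sequentially by blast
qed

lemma (in prob_space) expectation_square_sum_indep_le: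
  fixes b :: "nat \<Rightarrow> 'a \<Rightarrow> real"
  assumes ind: "indep_vars (\<lambda>_. borel) b UNIV"
    and sq_int: "\<And>i. integrable M (\<lambda>\<omega>. b i \<omega> ^ 2)"
    and centered: "\<And>i. expectation (b i) = 0"
    and var: "\<And>i. expectation (\<lambda>\<omega>. b i \<omega> ^ 2) \<le> \<mu>"
  shows "integrable M (\<lambda>\<omega>. (\<Sum>i<N. b i \<omega>) ^ 2)"
    and "expectation (\<lambda>\<omega>. (\<Sum>i<N. b i \<omega>) ^ 2) \<le> N * \<mu>"
proof -
  have [measurable]: "b i \<in> borel_measurable M" for i using ind by (auto simp: indep_vars_def)
  have int: "integrable M (b i)" for i
    by (rule square_integrable_imp_integrable) (auto simp: sq_int)
  have pair: "integrable M (\<lambda>\<omega>. b i \<omega> * b j \<omega>) \<and>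
      (i \<noteq> j \<longrightarrow> expectation (\<lambda>\<omega>. b i \<omega> * b j \<omega>) = 0)" for i j
  proof (cases "i = j")
    case False
    have "indep_vars (\<lambda>_. borel) b {i, j}" by (rule indep_vars_subset[OF ind]) auto
    with False show ?thesis
      using indep_vars_integrable[of "{i, j}" b] indep_vars_lebesgue_integral[of "{i, j}" b]
      by (simp add: int centered)
  qed (simp add: sq_int power2_eq_square[symmetric])
  have square: "(\<Sum>i<N. b i \<omega>) ^ 2 = (\<Sum>i<N. \<Sum>j<N. b i \<omega> * b j \<omega>)" for \<omega>
    by (simp add: power2_eq_square sum_product)
  show "integrable M (\<lambda>\<omega>. (\<Sum>i<N. b i \<omega>) ^ 2)" unfolding square using pair by auto
  have "expectation (\<lambda>\<omega>. (\<Sum>i<N. b i \<omega>) ^ 2) = (\<Sum>i<N. \<Sum>j<N. expectation (\<lambda>\<omega>. b i \<omega> * b j \<omega>))"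
    unfolding square using pair by simp
  also have "\<dots> = (\<Sum>i<N. expectation (\<lambda>\<omega>. b i \<omega> ^ 2))"
  proof (rule sum.cong[OF refl])
    fix i assume "i \<in> {..<N}"
    then have "(\<Sum>j<N. expectation (\<lambda>\<omega>. b i \<omega> * b j \<omega>)) = (\<Sum>j\<in>{i}. expectation (\<lambda>\<omega>. b i \<omega> * b j \<omega>))"
      using pair by (intro sum.mono_neutral_right) auto
    then show "(\<Sum>j<N. expectation (\<lambda>\<omega>. b i \<omega> * b j \<omega>)) = expectation (\<lambda>\<omega>. b i \<omega> ^ 2)"
      by (simp add: power2_eq_square)
  qed
  also have "\<dots> \<le> (\<Sum>i<N. \<mu>)" by (intro sum_mono var)
  finally show "expectation (\<lambda>\<omega>. (\<Sum>i<N. b i \<omega>) ^ 2) \<le> N * \<mu>" by simp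
qed

lemma (in prob_space) AE_eventually_abs_lt_along_squares:
  fixes T :: "nat \<Rightarrow> 'a \<Rightarrow> real" and \<mu> :: real
  assumes [measurable]: "\<And>N. T N \<in> borel_measurable M"
    and sq_int: "\<And>N. integrable M (\<lambda>\<omega>. T N \<omega> ^ 2)"
    and second_moment: "\<And>N. expectation (\<lambda>\<omega>. T N \<omega> ^ 2) \<le> N * \<mu>"
  shows "AE \<omega> in M. eventually (\<lambda>k. \<bar>T (k\<^sup>2) \<omega>\<bar> < real (k\<^sup>2)) sequentially"
proof -
  define A where "A k = {\<omega>\<in>space M. real ((Suc k)\<^sup>2) \<le> \<bar>T ((Suc k)\<^sup>2) \<omega>\<bar>}" for k
  have [measurable]: "A k \<in> sets M" for k unfolding A_def by measurable
  have bound: "measure M (A k) \<le> \<mu> / real (Suc k) ^ 2" for k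
  proof -
    have "measure M (A k) \<le> expectation (\<lambda>\<omega>. T ((Suc k)\<^sup>2) \<omega> ^ 2) / (real ((Suc k)\<^sup>2))\<^sup>2"
      unfolding A_def by (rule second_moment_method) (auto simp: sq_int)
    also have "\<dots> \<le> real ((Suc k)\<^sup>2) * \<mu> / (real ((Suc k)\<^sup>2))\<^sup>2"
      by (intro divide_right_mono second_moment) auto
    also have "\<dots> = \<mu> / real (Suc k) ^ 2"
      by (simp only: of_nat_power) (simp add: power2_eq_square)
    finally show ?thesis .
  qed
  have "summable (\<lambda>k. \<mu> / real (Suc k) ^ 2)"
  proof -
    have "summable (\<lambda>k. inverse (real k ^ 2))" by (rule inverse_power_summable) simp
    then have "summable (\<lambda>k. inverse (real (Suc k) ^ 2))" by (subst summable_Suc_iff)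
    then show ?thesis unfolding divide_inverse by (rule summable_mult)
  qed
  then have "summable (\<lambda>k. measure M (A k))"
    by (rule summable_comparison_test') (use bound in simp)
  then have "AE \<omega> in M. eventually (\<lambda>k. \<omega> \<in> space M - A k) sequentially"
    by (intro borel_cantelli_AE1) (auto simp: emeasure_eq_measure)
  then show ?thesis
  proof (rule AE_mp[OF _ AE_I2], intro impI)
    fix \<omega> assume "\<omega> \<in> space M" "eventually (\<lambda>k. \<omega> \<in> space M - A k) sequentially"
    then have "eventually (\<lambda>k. \<bar>T ((Suc k)\<^sup>2) \<omega>\<bar> < real ((Suc k)\<^sup>2)) sequentially"
      by (auto simp: A_def not_le simp del: of_nat_power of_nat_Suc elim: eventually_mono)
    then show "eventually (\<lambda>k. \<bar>T (k\<^sup>2) \<omega>\<bar> < real (k\<^sup>2)) sequentially"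
      by (rule eventually_sequentially_Suc[THEN iffD1])
  qed
qed

lemma (in prob_space) AE_sum_squares_linear:
  fixes a :: "nat \<Rightarrow> 'a \<Rightarrow> real"
  assumes ind: "indep_vars (\<lambda>_. borel) a UNIV"
    and int4: "\<And>i. integrable M (\<lambda>\<omega>. a i \<omega> ^ 4)"
    and m2: "\<And>i. expectation (\<lambda>\<omega>. a i \<omega> ^ 2) = s"
    and m4: "\<And>i. expectation (\<lambda>\<omega>. a i \<omega> ^ 4) \<le> \<mu>"
  shows "AE \<omega> in M. \<exists>C. eventually (\<lambda>m. (\<Sum>i<m. (a i \<omega>)\<^sup>2) \<le> C * real m) sequentially"
proof -
  have [measurable]: "a i \<in> borel_measurable M" for i using ind by (auto simp: indep_vars_def)
  have int2: "integrable M (\<lambda>\<omega>. a i \<omega> ^ 2)" for i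
    by (rule square_integrable_imp_integrable) (auto simp: int4 power_mult[of _ 2 2, simplified])
  define b where "b i \<omega> = a i \<omega> ^ 2 - s" for i \<omega>
  have b_sq: "b i \<omega> ^ 2 = a i \<omega> ^ 4 - 2 * s * a i \<omega> ^ 2 + s\<^sup>2" for i \<omega>
    by (simp add: b_def power2_eq_square algebra_simps power4_eq_xxxx)
  have b_indep: "indep_vars (\<lambda>_. borel) b UNIV"
    unfolding b_def by (rule indep_vars_compose2[OF ind]) auto
  have b_sq_int: "integrable M (\<lambda>\<omega>. b i \<omega> ^ 2)" for i unfolding b_sq using int2 int4 by auto
  have b_centered: "expectation (b i) = 0" for i
    using int2 m2 by (simp add: b_def[abs_def] prob_space)
  have b_var: "expectation (\<lambda>\<omega>. b i \<omega> ^ 2) \<le> \<mu>" for i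
    unfolding b_sq using int2 int4 m2 m4[of i] zero_le_square[of s]
    by (simp add: prob_space power2_eq_square del: zero_le_square)
  note T = expectation_square_sum_indep_le[OF b_indep b_sq_int b_centered b_var]
  have "AE \<omega> in M. eventually (\<lambda>k. \<bar>\<Sum>i<k\<^sup>2. b i \<omega>\<bar> < real (k\<^sup>2)) sequentially"
    by (rule AE_eventually_abs_lt_along_squares[where T="\<lambda>N \<omega>. \<Sum>i<N. b i \<omega>", OF _ T])
       (simp add: b_def)
  then show ?thesis
  proof (rule AE_mp[OF _ AE_I2], intro impI)
    fix \<omega> assume "eventually (\<lambda>k. \<bar>\<Sum>i<k\<^sup>2. b i \<omega>\<bar> < real (k\<^sup>2)) sequentially"
    then have "eventually (\<lambda>k. (\<Sum>i<k\<^sup>2. (a i \<omega>)\<^sup>2) \<le> (1 + s) * real (k\<^sup>2)) sequentially"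
      by (rule eventually_mono) (simp add: b_def sum_subtractf algebra_simps)
    then have "eventually (\<lambda>m. (\<Sum>i<m. (a i \<omega>)\<^sup>2) \<le> 4 * (1 + s) * real m) sequentially"
      by (intro sum_le_linear_of_square_indices) auto
    then show "\<exists>C. eventually (\<lambda>m. (\<Sum>i<m. (a i \<omega>)\<^sup>2) \<le> C * real m) sequentially" ..
  qed
qed

lemma (in prob_space) AE_sum_squares_linear_gaussian:
  assumes "indep_vars (\<lambda>_. borel) a UNIV" and "\<And>i. centered_gaussian_real M (a i) s"
  shows "AE \<omega> in M. \<exists>C. eventually (\<lambda>m. (\<Sum>i<m. (a i \<omega>)\<^sup>2) \<le> C * real m) sequentially"
  using assms(1) centered_gaussian_real_moments[OF prob_space_axioms assms(2)]
  by (intro AE_sum_squares_linear[where \<mu>="3 * s\<^sup>2"]) auto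

lemma sum_squares_add_linear:
  fixes a b :: "nat \<Rightarrow> real"
  assumes "eventually (\<lambda>m. (\<Sum>i<m. (a i)\<^sup>2) \<le> A * real m) sequentially"
    and "eventually (\<lambda>m. (\<Sum>i<m. (b i)\<^sup>2) \<le> B * real m) sequentially"
  shows "eventually (\<lambda>m. (\<Sum>i<m. (a i + b i)\<^sup>2) \<le> (2 * A + 2 * B) * real m) sequentially"
  using assms
proof eventually_elim
  case (elim m)
  have "(x + y)\<^sup>2 \<le> 2 * x\<^sup>2 + 2 * y\<^sup>2" for x y :: real
    using sum_squares_bound[of x y] by (simp add: power2_sum)
  then have "(\<Sum>i<m. (a i + b i)\<^sup>2) \<le> (\<Sum>i<m. 2 * (a i)\<^sup>2 + 2 * (b i)\<^sup>2)"
    by (intro sum_mono)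
  also have "\<dots> \<le> (2 * A + 2 * B) * real m"
    using elim by (simp add: sum.distrib sum_distrib_left[symmetric] algebra_simps)
  finally show ?case .
qed

section \<open>Gram matrices of i.i.d. rows\<close>

lemma (in prob_space) AE_infinite_indep_const_prob:
  assumes ind: "indep_vars (\<lambda>_. N) X UNIV" and B: "B \<in> sets N"
    and q: "\<And>i. prob {\<omega>\<in>space M. X i \<omega> \<in> B} = q" and "q > 0"
  shows "AE \<omega> in M. infinite {i::nat. X i \<omega> \<in> B}"
proof -
  define E where "E i = {\<omega>\<in>space M. X i \<omega> \<notin> B}" for i
  have E_indep: "indep_events E UNIV"
    unfolding E_def using B by (intro indep_eventsI_indep_vars[OF ind]) (auto simp: Diff_eq[symmetric])
  then have E_events: "E i \<in> events" for i by (auto simp: indep_events_def)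
  have prob_E: "prob (E i) = 1 - q" for i
  proof -
    have "X i \<in> measurable M N" using ind by (auto simp: indep_vars_def)
    then have "{\<omega>\<in>space M. X i \<omega> \<in> B} \<in> events"
      by (rule measurable_sets_Collect) (use B in \<open>simp add: sets.Int_space_eq1\<close>)
    moreover have "E i = space M - {\<omega>\<in>space M. X i \<omega> \<in> B}" by (auto simp: E_def)
    ultimately show ?thesis using prob_compl q by simp
  qed
  have "q \<le> 1" using q[of 0] by (metis prob_le_1)
  have "AE \<omega> in M. \<exists>i\<ge>J. X i \<omega> \<in> B" for J
  proof (rule AE_I')
    have "prob (\<Inter>i\<in>{J..}. E i) \<le> (1 - q) ^ Suc L" for L
    proof -
      have "prob (\<Inter>i\<in>{J..}. E i) \<le> prob (\<Inter>i\<in>{J..J+L}. E i)"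
        using E_events by (intro finite_measure_mono) auto
      also have "\<dots> = (\<Prod>i\<in>{J..J+L}. prob (E i))"
        using E_indep unfolding indep_events_def by auto
      finally show ?thesis by (simp add: prob_E)
    qed
    moreover have "(\<lambda>L. (1 - q) ^ Suc L) \<longlonglongrightarrow> 0"
      using \<open>q \<le> 1\<close> \<open>q > 0\<close> by (intro LIMSEQ_Suc LIMSEQ_power_zero) auto
    ultimately have "prob (\<Inter>i\<in>{J..}. E i) \<le> 0" by (intro LIMSEQ_le_const[of _ 0]) auto
    then have "prob (\<Inter>i\<in>{J..}. E i) = 0" using measure_nonneg[of M] by (meson order.antisym)
    moreover have "(\<Inter>i\<in>{J..}. E i) \<in> events" using E_events by auto
    ultimately show "(\<Inter>i\<in>{J..}. E i) \<in> null_sets M" by (simp add: null_setsI emeasure_eq_measure)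
    show "{\<omega>\<in>space M. \<not> (\<exists>i\<ge>J. X i \<omega> \<in> B)} \<subseteq> (\<Inter>i\<in>{J..}. E i)" by (auto simp: E_def)
  qed
  then have "AE \<omega> in M. \<forall>J. \<exists>i\<ge>J. X i \<omega> \<in> B" by (simp add: AE_all_countable)
  then show ?thesis by (rule AE_mp[OF _ AE_I2]) (simp add: infinite_nat_iff_unbounded_le)
qed

lemma (in prob_space) prob_margin_pos:
  fixes f g :: "'a \<Rightarrow> real"
  assumes [measurable]: "f \<in> borel_measurable M" "g \<in> borel_measurable M"
    and pos: "prob {\<omega>\<in>space M. f \<omega> \<noteq> 0} > 0"
  shows "\<exists>\<eta>>0. \<exists>R>0. prob {\<omega>\<in>space M. \<eta> < \<bar>f \<omega>\<bar> \<and> g \<omega> \<le> R} > 0"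
proof (rule ccontr)
  define E where "E n = {\<omega>\<in>space M. 1 / (real n + 1) < \<bar>f \<omega>\<bar> \<and> g \<omega> \<le> real n + 1}" for n
  have [measurable]: "E n \<in> sets M" for n unfolding E_def by measurable
  assume contra: "\<not> ?thesis"
  then have "\<forall>\<eta>>0. \<forall>R>0. prob {\<omega>\<in>space M. \<eta> < \<bar>f \<omega>\<bar> \<and> g \<omega> \<le> R} \<le> 0" by (meson not_less)
  then have "prob (E n) \<le> 0" for n
    unfolding E_def by (rule allE[of _ "1 / (real n + 1)"]) (simp add: add_pos_nonneg)
  then have "prob (E n) = 0" for n using measure_nonneg[of M] by (meson order.antisym)
  then have "AE \<omega> in M. \<forall>n. \<omega> \<notin> E n" by (simp add: prob_eq_0 AE_all_countable)
  moreover have "f \<omega> = 0" if "\<omega> \<in> space M" "\<forall>n. \<omega> \<notin> E n" for \<omega>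
  proof (rule ccontr)
    assume "f \<omega> \<noteq> 0"
    define n where "n = nat \<lceil>max (1 / \<bar>f \<omega>\<bar>) (g \<omega>)\<rceil>"
    have "1 / \<bar>f \<omega>\<bar> \<le> real n" "g \<omega> \<le> real n"
      unfolding n_def by (meson max.boundedE real_nat_ceiling_ge order.trans)+
    then have "\<omega> \<in> E n" using \<open>f \<omega> \<noteq> 0\<close> that(1) by (auto simp: E_def field_simps)
    then show False using that(2) by blast
  qed
  ultimately have "AE \<omega> in M. \<not> f \<omega> \<noteq> 0" by auto
  then show False using pos prob_eq_0_AE by simp
qed

lemma (in prob_space) prob_inner_nonzero_pos:
  fixes X :: "nat \<Rightarrow> 'a \<Rightarrow> real^'n"
  assumes [measurable]: "\<And>k. X k \<in> borel_measurable M"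
    and same_distr: "\<And>k. distr M borel (X k) = distr M borel (X 0)"
    and inv: "AE \<omega> in M. eventually (\<lambda>m. invertible (gram (\<lambda>k. X k \<omega>) m)) sequentially"
    and "u \<noteq> 0"
  shows "prob {\<omega>\<in>space M. u \<bullet> X 0 \<omega> \<noteq> 0} > 0"
proof (rule ccontr)
  assume "\<not> ?thesis"
  then have "prob {\<omega>\<in>space M. u \<bullet> X 0 \<omega> \<noteq> 0} = 0"
    using measure_nonneg[of M] by (meson not_less order.antisym)
  then have "prob {\<omega>\<in>space M. u \<bullet> X k \<omega> \<noteq> 0} = 0" for k
    using prob_eq_of_distr_eq[OF same_distr[of k], of "{x. u \<bullet> x \<noteq> 0}"] by simp
  then have null: "AE \<omega> in M. \<omega> \<notin> {\<omega>\<in>space M. u \<bullet> X k \<omega> \<noteq> 0}" for k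
    by (subst (asm) prob_eq_0) auto
  have "AE \<omega> in M. u \<bullet> X k \<omega> = 0" for k
    using null[of k] AE_space[of M] by eventually_elim auto
  then have "AE \<omega> in M. \<forall>k. u \<bullet> X k \<omega> = 0" by (simp add: AE_all_countable)
  with inv have "AE \<omega> in M. False"
  proof eventually_elim
    case (elim \<omega>)
    then obtain m where "invertible (gram (\<lambda>k. X k \<omega>) m)" by (auto simp: eventually_sequentially)
    moreover have "gram (\<lambda>k. X k \<omega>) m *v u = 0"
      using elim by (simp add: gram_mult_vector inner_commute)
    ultimately have "u = 0" by (metis inj_matrix_vector_mult injD matrix_vector_mult_0_right)
    then show False using \<open>u \<noteq> 0\<close> by simp
  qed
  then show False by (simp add: AE_False)
qed

lemma eventually_card_Int_lessThan_ge:
  assumes "infinite S"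
  shows "eventually (\<lambda>m. c \<le> card (S \<inter> {..<m})) sequentially"
proof -
  obtain A where A: "finite A" "card A = c" "A \<subseteq> S" using infinite_arbitrarily_large[OF assms] by blast
  then obtain N where "\<forall>a\<in>A. a < N" by (meson finite_nat_set_iff_bounded)
  then have "A \<subseteq> S \<inter> {..<m}" if "N \<le> m" for m using A(3) that by auto
  then have "c \<le> card (S \<inter> {..<m})" if "N \<le> m" for m
    using A(2) that by (metis card_mono finite_Int finite_lessThan)
  then show ?thesis unfolding eventually_sequentially by blast
qed

lemma quadform_ge_iff_unit:
  fixes G :: "real^'n^'n"
  shows "quadform_ge G L \<longleftrightarrow> (\<forall>w. norm w = 1 \<longrightarrow> L \<le> w \<bullet> (G *v w))"
proof
  assume "quadform_ge G L"
  then show "\<forall>w. norm w = 1 \<longrightarrow> L \<le> w \<bullet> (G *v w)"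
    by (metis quadform_geD mult.right_neutral power_one)
next
  assume unit: "\<forall>w. norm w = 1 \<longrightarrow> L \<le> w \<bullet> (G *v w)"
  show "quadform_ge G L" unfolding quadform_ge_def
  proof
    fix v :: "real^'n"
    show "L * (norm v)\<^sup>2 \<le> v \<bullet> (G *v v)"
    proof (cases "v = 0")
      case False
      define w where "w = (1 / norm v) *\<^sub>R v"
      have "norm v *\<^sub>R w = v" and "norm w = 1" using False by (simp_all add: w_def)
      moreover have "(norm v *\<^sub>R w) \<bullet> (G *v (norm v *\<^sub>R w)) = (norm v)\<^sup>2 * (w \<bullet> (G *v w))"
        by (simp add: matrix_vector_mult_scaleR power2_eq_square)
      moreover have "L \<le> w \<bullet> (G *v w)" using unit \<open>norm w = 1\<close> by blast
      ultimately show ?thesis by (metis mult.commute mult_left_mono zero_le_power2)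
    qed simp
  qed
qed

lemma abs_inner_ge_of_dist_le:
  fixes u w x :: "'a::real_inner"
  assumes "\<eta> < \<bar>u \<bullet> x\<bar>" "norm x \<le> R" "dist u w \<le> \<eta> / (2 * R)" "R > 0"
  shows "\<eta> / 2 \<le> \<bar>x \<bullet> w\<bar>"
proof -
  have "\<bar>(u - w) \<bullet> x\<bar> \<le> norm (u - w) * norm x" by (rule Cauchy_Schwarz_ineq2)
  also have "\<dots> \<le> \<eta> / (2 * R) * R"
    using assms by (intro mult_mono) (auto simp: dist_norm intro: order.trans[OF norm_ge_zero])
  finally have "\<bar>(u - w) \<bullet> x\<bar> \<le> \<eta> / 2" using \<open>R > 0\<close> by simp
  moreover have "u \<bullet> x = (u - w) \<bullet> x + x \<bullet> w" by (simp add: inner_diff_left inner_commute[of x w])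
  then have "\<bar>u \<bullet> x\<bar> \<le> \<bar>(u - w) \<bullet> x\<bar> + \<bar>x \<bullet> w\<bar>" by (metis abs_triangle_ineq)
  ultimately show ?thesis using assms(1) by linarith
qed

lemma quadform_ge_gram_eventually:
  fixes x :: "nat \<Rightarrow> real^'n" and K :: "(real^'n) set"
  assumes "finite K"
    and cover: "sphere 0 1 \<subseteq> (\<Union>u\<in>K. ball u (\<eta> u / (2 * R u)))"
    and pos: "\<And>u. u \<in> K \<Longrightarrow> \<eta> u > 0 \<and> R u > 0"
    and often: "\<And>u. u \<in> K \<Longrightarrow> infinite {i. \<eta> u < \<bar>u \<bullet> x i\<bar> \<and> norm (x i) \<le> R u}"
  shows "eventually (\<lambda>m. quadform_ge (gram x m) L) sequentially"
proof -
  define S where "S u = {i. \<eta> u < \<bar>u \<bullet> x i\<bar> \<and> norm (x i) \<le> R u}" for u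
  define c where "c u = nat \<lceil>4 * L / (\<eta> u)\<^sup>2\<rceil>" for u
  have "eventually (\<lambda>m. \<forall>u\<in>K. c u \<le> card (S u \<inter> {..<m})) sequentially"
    using \<open>finite K\<close> often
    by (intro eventually_ball_finite) (auto simp: S_def intro: eventually_card_Int_lessThan_ge)
  then show ?thesis
  proof (rule eventually_mono, unfold quadform_ge_iff_unit, intro allI impI)
    fix m and w :: "real^'n"
    assume count: "\<forall>u\<in>K. c u \<le> card (S u \<inter> {..<m})" and "norm w = 1"
    then have "w \<in> (\<Union>u\<in>K. ball u (\<eta> u / (2 * R u)))" using cover by (auto simp del: mem_ball)
    then obtain u where u: "u \<in> K" "dist u w < \<eta> u / (2 * R u)" by auto
    have "\<eta> u > 0" "R u > 0" using pos[OF u(1)] by auto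
    have "(\<eta> u)\<^sup>2 / 4 \<le> (x i \<bullet> w)\<^sup>2" if "i \<in> S u" for i
    proof -
      have "\<eta> u / 2 \<le> \<bar>x i \<bullet> w\<bar>"
        using that u(2) \<open>R u > 0\<close> by (intro abs_inner_ge_of_dist_le) (auto simp: S_def)
      then have "(\<eta> u / 2)\<^sup>2 \<le> \<bar>x i \<bullet> w\<bar>\<^sup>2"
        using \<open>\<eta> u > 0\<close> by (intro power_mono) auto
      then show ?thesis by (simp add: power_divide)
    qed
    then have "real (card (S u \<inter> {..<m})) * ((\<eta> u)\<^sup>2 / 4) \<le> (\<Sum>i\<in>S u \<inter> {..<m}. (x i \<bullet> w)\<^sup>2)"
      using sum_mono[of "S u \<inter> {..<m}" "\<lambda>_. (\<eta> u)\<^sup>2 / 4"] by simp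
    also have "\<dots> \<le> w \<bullet> (gram x m *v w)"
      unfolding inner_gram_mult_vector by (intro sum_mono2) auto
    finally have sum_bound: "real (card (S u \<inter> {..<m})) * ((\<eta> u)\<^sup>2 / 4) \<le> w \<bullet> (gram x m *v w)" .
    have "4 * L / (\<eta> u)\<^sup>2 \<le> real (c u)" unfolding c_def by (rule real_nat_ceiling_ge)
    then have "L \<le> real (c u) * ((\<eta> u)\<^sup>2 / 4)"
      using \<open>\<eta> u > 0\<close> by (simp add: pos_divide_le_eq mult.commute)
    also have "\<dots> \<le> real (card (S u \<inter> {..<m})) * ((\<eta> u)\<^sup>2 / 4)"
      using count u(1) by (intro mult_right_mono) auto
    finally show "L \<le> w \<bullet> (gram x m *v w)" using sum_bound by linarith
  qed
qed

lemma (in prob_space) AE_gram_quadform_unbounded: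
  fixes X :: "nat \<Rightarrow> 'a \<Rightarrow> real^'n"
  assumes ind: "indep_vars (\<lambda>_. borel) X UNIV"
    and same_distr: "\<And>k. distr M borel (X k) = distr M borel (X 0)"
    and inv: "AE \<omega> in M. eventually (\<lambda>m. invertible (gram (\<lambda>k. X k \<omega>) m)) sequentially"
  shows "AE \<omega> in M. \<forall>L. eventually (\<lambda>m. quadform_ge (gram (\<lambda>k. X k \<omega>) m) L) sequentially"
proof -
  have [measurable]: "X k \<in> borel_measurable M" for k using ind by (auto simp: indep_vars_def)
  have margin: "\<forall>u\<in>sphere 0 1. \<exists>\<eta> R. \<eta> > 0 \<and> R > 0 \<and>
      prob {\<omega>\<in>space M. \<eta> < \<bar>u \<bullet> X 0 \<omega>\<bar> \<and> norm (X 0 \<omega>) \<le> R} > 0"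
  proof
    fix u :: "real^'n" assume "u \<in> sphere 0 1"
    then have "u \<noteq> 0" by auto
    from prob_margin_pos[OF _ _ prob_inner_nonzero_pos[OF _ same_distr inv this]]
    show "\<exists>\<eta> R. \<eta> > 0 \<and> R > 0 \<and> prob {\<omega>\<in>space M. \<eta> < \<bar>u \<bullet> X 0 \<omega>\<bar> \<and> norm (X 0 \<omega>) \<le> R} > 0"
      by auto
  qed
  obtain \<eta> where margin_\<eta>: "\<forall>u\<in>sphere 0 1. \<exists>R. \<eta> u > 0 \<and> R > 0 \<and>
      prob {\<omega>\<in>space M. \<eta> u < \<bar>u \<bullet> X 0 \<omega>\<bar> \<and> norm (X 0 \<omega>) \<le> R} > 0"
    using bchoice[OF margin] by blast
  obtain R where \<eta>R: "\<forall>u\<in>sphere 0 1. \<eta> u > 0 \<and> R u > 0 \<and>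
      prob {\<omega>\<in>space M. \<eta> u < \<bar>u \<bullet> X 0 \<omega>\<bar> \<and> norm (X 0 \<omega>) \<le> R u} > 0"
    using bchoice[OF margin_\<eta>] by blast
  have cover: "sphere 0 1 \<subseteq> (\<Union>u\<in>sphere 0 1. ball u (\<eta> u / (2 * R u)))"
  proof
    fix u :: "real^'n" assume "u \<in> sphere 0 1"
    moreover then have "u \<in> ball u (\<eta> u / (2 * R u))" using \<eta>R by simp
    ultimately show "u \<in> (\<Union>u\<in>sphere 0 1. ball u (\<eta> u / (2 * R u)))" by blast
  qed
  obtain K where K: "K \<subseteq> sphere 0 1" "finite K" "sphere 0 1 \<subseteq> (\<Union>u\<in>K. ball u (\<eta> u / (2 * R u)))"
    by (rule compactE_image[OF compact_sphere _ cover]) auto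
  have "AE \<omega> in M. infinite {i. X i \<omega> \<in> {x. \<eta> u < \<bar>u \<bullet> x\<bar> \<and> norm x \<le> R u}}" if "u \<in> K" for u
  proof (rule AE_infinite_indep_const_prob[OF ind])
    show B: "{x. \<eta> u < \<bar>u \<bullet> x\<bar> \<and> norm x \<le> R u} \<in> sets borel" by measurable
    show "prob {\<omega>\<in>space M. X i \<omega> \<in> {x. \<eta> u < \<bar>u \<bullet> x\<bar> \<and> norm x \<le> R u}}
        = prob {\<omega>\<in>space M. \<eta> u < \<bar>u \<bullet> X 0 \<omega>\<bar> \<and> norm (X 0 \<omega>) \<le> R u}" for i
      using prob_eq_of_distr_eq[OF same_distr[of i] _ _ B] by simp
    show "prob {\<omega>\<in>space M. \<eta> u < \<bar>u \<bullet> X 0 \<omega>\<bar> \<and> norm (X 0 \<omega>) \<le> R u} > 0"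
      using \<eta>R that K(1) by blast
  qed
  then have "AE \<omega> in M. \<forall>u\<in>K. infinite {i. \<eta> u < \<bar>u \<bullet> X i \<omega>\<bar> \<and> norm (X i \<omega>) \<le> R u}"
    using K(2) by (intro eventually_ball_finite) auto
  then show ?thesis
  proof (rule eventually_mono, intro allI)
    fix \<omega> L
    assume "\<forall>u\<in>K. infinite {i. \<eta> u < \<bar>u \<bullet> X i \<omega>\<bar> \<and> norm (X i \<omega>) \<le> R u}"
    then show "eventually (\<lambda>m. quadform_ge (gram (\<lambda>k. X k \<omega>) m) L) sequentially"
      using \<eta>R K(1) by (intro quadform_ge_gram_eventually[OF K(2) K(3)]) auto
  qed
qed

theorem proposition4p3:
  fixes M :: "'a measure"
    and B :: "real^'d^'p" and \<gamma> :: "real^'d" and \<alpha> :: "real^'p"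
    and SZ :: "real^'d^'d" and SX :: "real^'p^'p" and s2Y :: real
    and Z NZ :: "nat \<Rightarrow> 'a \<Rightarrow> real^'d"
    and NX NXt :: "nat \<Rightarrow> 'a \<Rightarrow> real^'p"
    and NY NYi :: "nat \<Rightarrow> 'a \<Rightarrow> real"
    and XO XI :: "nat \<Rightarrow> 'a \<Rightarrow> real^'p"
    and YO YI :: "nat \<Rightarrow> 'a \<Rightarrow> real"
    and n :: "nat \<Rightarrow> nat" and c \<epsilon> :: real
  assumes "prob_space M"
    \<comment> \<open>noises of the k-th observational sample (Z k, NX k, NY k) and of the k-th
        interventional sample (NZ k, NXt k, NYi k); all samples mutually independent\<close>
    and "prob_space.indep_vars M (\<lambda>_. borel)
          (\<lambda>j \<omega>. case j of Inl k \<Rightarrow> (Z k \<omega>, NX k \<omega>, NY k \<omega>)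
                         | Inr k \<Rightarrow> (NZ k \<omega>, NXt k \<omega>, NYi k \<omega>)) UNIV"
    \<comment> \<open>within each sample the three noises are mutually independent
        (joint law = product of the marginal laws)\<close>
    and "\<And>k. distr M (borel \<Otimes>\<^sub>M borel \<Otimes>\<^sub>M borel) (\<lambda>\<omega>. (Z k \<omega>, NX k \<omega>, NY k \<omega>))
              = distr M borel (Z k) \<Otimes>\<^sub>M (distr M borel (NX k) \<Otimes>\<^sub>M distr M borel (NY k))"
    and "\<And>k. distr M (borel \<Otimes>\<^sub>M borel \<Otimes>\<^sub>M borel) (\<lambda>\<omega>. (NZ k \<omega>, NXt k \<omega>, NYi k \<omega>))
              = distr M borel (NZ k) \<Otimes>\<^sub>M (distr M borel (NXt k) \<Otimes>\<^sub>M distr M borel (NYi k))"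
    \<comment> \<open>distributions of the noises\<close>
    and "\<And>k. centered_gaussian_vec M (Z k) SZ"
    and "\<And>k. centered_gaussian_vec M (NX k) SX"
    and "\<And>k. centered_gaussian_real M (NY k) s2Y"
    and "\<And>k. centered_gaussian_vec M (NZ k) SZ"
    and "\<And>k. centered_gaussian_real M (NYi k) s2Y"
    and "\<And>k. NXt k \<in> borel_measurable M"
    and "\<And>k. distr M borel (NXt k) = distr M borel (NXt 0)"
    \<comment> \<open>structural equations: observational and interventional model\<close>
    and "\<And>k \<omega>. XO k \<omega> = B *v Z k \<omega> + NX k \<omega>"
    and "\<And>k \<omega>. YO k \<omega> = Z k \<omega> \<bullet> \<gamma> + XO k \<omega> \<bullet> \<alpha> + NY k \<omega>"
    and "\<And>k \<omega>. XI k \<omega> = NXt k \<omega>"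
    and "\<And>k \<omega>. YI k \<omega> = NZ k \<omega> \<bullet> \<gamma> + XI k \<omega> \<bullet> \<alpha> + NYi k \<omega>"
    \<comment> \<open>X_O^T X_O and X_I^T X_I are non-singular (almost surely, for all large m)\<close>
    and "AE \<omega> in M. eventually (\<lambda>m. invertible (gram (\<lambda>k. XO k \<omega>) (n m)) \<and>
                                      invertible (gram (\<lambda>k. XI k \<omega>) m)) sequentially"
    and "c > 0"
    and "(\<lambda>m. real (n m) / real m) \<longlonglongrightarrow> c"
    and "\<epsilon> > 0"
  shows "AE \<omega> in M. (\<lambda>m. W_hat \<epsilon> (\<lambda>k. XO k \<omega>) (\<lambda>k. YO k \<omega>) (\<lambda>k. XI k \<omega>) (\<lambda>k. YI k \<omega>) (n m) m)
                        \<longlonglongrightarrow> mat 1"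
proof -
  interpret prob_space M by fact
  note indep_Inr = indep_vars_Inr[OF assms(2)]
  note continuous_measurable = borel_measurable_continuous_onI continuous_intros
  have "AE \<omega> in M. \<exists>C. eventually (\<lambda>m. (\<Sum>i<m. (NZ i \<omega> \<bullet> \<gamma>)\<^sup>2) \<le> C * real m) sequentially"
    using indep_Inr[of "\<lambda>t. fst t \<bullet> \<gamma>"]
    by (intro AE_sum_squares_linear_gaussian[OF _ centered_gaussian_vec_inner[OF assms(8)]])
       (simp add: continuous_measurable)
  moreover have "AE \<omega> in M. \<exists>C. eventually (\<lambda>m. (\<Sum>i<m. (NYi i \<omega>)\<^sup>2) \<le> C * real m) sequentially"
    using indep_Inr[of "\<lambda>t. snd (snd t)"]
    by (intro AE_sum_squares_linear_gaussian[OF _ assms(9)]) (simp add: continuous_measurable)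
  moreover have "AE \<omega> in M. \<forall>L. eventually (\<lambda>m. quadform_ge (gram (\<lambda>k. XI k \<omega>) m) L) sequentially"
    using indep_Inr[of "\<lambda>t. fst (snd t)"] assms(11,16)
    by (intro AE_gram_quadform_unbounded)
       (auto simp: assms(14) continuous_measurable elim: eventually_mono)
  ultimately show ?thesis using assms(16)
  proof eventually_elim
    case (elim \<omega>)
    then obtain A B where "eventually (\<lambda>m. (\<Sum>i<m. (NZ i \<omega> \<bullet> \<gamma>)\<^sup>2) \<le> A * real m) sequentially"
      and "eventually (\<lambda>m. (\<Sum>i<m. (NYi i \<omega>)\<^sup>2) \<le> B * real m) sequentially" by blast
    from sum_squares_add_linear[OF this]
    have "eventually (\<lambda>m. (\<Sum>i<m. (YI i \<omega> - XI i \<omega> \<bullet> \<alpha>)\<^sup>2) \<le> (2 * A + 2 * B) * real m) sequentially"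
      by (simp add: assms(15))
    with elim show ?case
      by (intro W_hat_tendsto_mat_1 \<open>\<epsilon> > 0\<close>) (auto elim: eventually_mono)
  qed
qed

end
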